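(* Let $\mathcal G$ be a core network with input nodes $\iota_1,\dots,\iota_n$ and output node $o$, and let $\rho_k>\rho_{k+1}$ be two adjacent absolutely super-simple nodes. Then: (a) $\rho_k$ and $\rho_{k+1}$ are adjacent $\iota_m$-super-simple nodes, for every $m=1,\dots,n$; (b) for every $m=1,\dots,n$, every $\iota_m$-simple node in $\mathcal L_m(\rho_k,\rho_{k+1})$ is an absolutely simple node; (c) $\mathcal L_m(\rho_k,\rho_{k+1})=\mathcal L(\rho_k,\rho_{k+1})$ for every $m=1,\dots,n$.
   Context: Node $b$ is downstream from $a$ if there is a directed path from $a$ to $b$. A core network: every node is upstream from $o$ and downstream from at least one input node. A simple path visits each node at most once; an $\iota_mo$-simple path is a simple path from $\iota_m$ to $o$. A node is $\iota_m$-simple if it lies on an $\iota_mo$-simple path; absolutely simple if $\iota_m$-simple for every $m$. An $\iota_m$-super-simple node is an $\iota_m$-simple node lying on every $\iota_mo$-simple path; the $\iota_m$-super-simple nodes appear in the same order on every $\iota_mo$-simple path, and two of them are adjacent $\iota_m$-super-simple nodes if they are consecutive in this order. A node is absolutely super-simple if it lies on every $\iota_mo$-simple path for every $m$; these are totally ordered $\rho_1>\cdots>\rho_p>o$, where $a>b$ means $b$ comes after $a$ on every $\iota_mo$-simple path for every $m$, and $\rho_k,\rho_{k+1}$ are adjacent if consecutive in this order. For adjacent $\iota_m$-super-simple nodes $\rho_k>\rho_{k+1}$, an $\iota_m$-simple node $\rho$ is between them if some $\iota_mo$-simple path visits $\rho_k,\rho,\rho_{k+1}$ in that order; $\mathcal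 L_m(\rho_k,\rho_{k+1})$ is the subnetwork of $\iota_m$-simple nodes between $\rho_k$ and $\rho_{k+1}$, with the arrows of $\mathcal G_m$ (the subnetwork of nodes downstream from $\iota_m$ and upstream from $o$) connecting them. For adjacent absolutely super-simple nodes, an absolutely simple node $\rho$ is between them if for some $m$ some $\iota_mo$-simple path visits $\rho_k,\rho,\rho_{k+1}$ in that order; $\mathcal L(\rho_k,\rho_{k+1})$ is the subnetwork of absolutely simple nodes between them, with arrows of $\mathcal G$ connecting them. *)

theory Defs
  imports Main
begin

text \<open>An input-output network: a finite node set V, a set of arrows E \<subseteq> V \<times> V
  (multiplicities of arrows are irrelevant for path notions), input nodes
  inp 1, ..., inp n and an output node out.\<close>

definition downstream :: "('a \<times> 'a) set \<Rightarrow> 'a \<Rightarrow> 'a \<Rightarrow> bool" where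
  "downstream E a b \<longleftrightarrow> (a, b) \<in> E\<^sup>*"

definition core_network ::
  "'a set \<Rightarrow> ('a \<times> 'a) set \<Rightarrow> (nat \<Rightarrow> 'a) \<Rightarrow> nat \<Rightarrow> 'a \<Rightarrow> bool" where
  "core_network V E inp n out \<longleftrightarrow>
     finite V \<and> E \<subseteq> V \<times> V \<and> n \<ge> 1 \<and>
     inp ` {1..n} \<subseteq> V \<and> inj_on inp {1..n} \<and>
     out \<in> V \<and> out \<notin> inp ` {1..n} \<and>
     (\<forall>v\<in>V. downstream E v out \<and> (\<exists>m\<in>{1..n}. downstream E (inp m) v))"

definition is_path :: "('a \<times> 'a) set \<Rightarrow> 'a list \<Rightarrow> bool" where
  "is_path E p \<longleftrightarrow> p \<noteq> [] \<and> (\<forall>i. Suc i < length p \<longrightarrow> (p ! i, p ! Suc i) \<in> E)"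

definition simple_path :: "('a \<times> 'a) set \<Rightarrow> 'a \<Rightarrow> 'a \<Rightarrow> 'a list \<Rightarrow> bool" where
  "simple_path E a b p \<longleftrightarrow> is_path E p \<and> distinct p \<and> hd p = a \<and> last p = b"

definition in_simple :: "('a \<times> 'a) set \<Rightarrow> 'a \<Rightarrow> 'a \<Rightarrow> 'a \<Rightarrow> bool" where
  "in_simple E i out v \<longleftrightarrow> (\<exists>p. simple_path E i out p \<and> v \<in> set p)"

definition abs_simple :: "('a \<times> 'a) set \<Rightarrow> (nat \<Rightarrow> 'a) \<Rightarrow> nat \<Rightarrow> 'a \<Rightarrow> 'a \<Rightarrow> bool" where
  "abs_simple E inp n out v \<longleftrightarrow> (\<forall>m\<in>{1..n}. in_simple E (inp m) out v)"

definition in_super_simple :: "('a \<times> 'a) set \<Rightarrow> 'a \<Rightarrow> 'a \<Rightarrow> 'a \<Rightarrow> bool" where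
  "in_super_simple E i out v \<longleftrightarrow>
     in_simple E i out v \<and> (\<forall>p. simple_path E i out p \<longrightarrow> v \<in> set p)"

definition before_on :: "'a list \<Rightarrow> 'a \<Rightarrow> 'a \<Rightarrow> bool" where
  "before_on p a b \<longleftrightarrow> (\<exists>i j. i < j \<and> j < length p \<and> p ! i = a \<and> p ! j = b)"

definition in_greater :: "('a \<times> 'a) set \<Rightarrow> 'a \<Rightarrow> 'a \<Rightarrow> 'a \<Rightarrow> 'a \<Rightarrow> bool" where
  "in_greater E i out a b \<longleftrightarrow> (\<forall>p. simple_path E i out p \<longrightarrow> before_on p a b)"

definition adjacent_in_super_simple :: "('a \<times> 'a) set \<Rightarrow> 'a \<Rightarrow> 'a \<Rightarrow> 'a \<Rightarrow> 'a \<Rightarrow> bool" where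
  "adjacent_in_super_simple E i out a b \<longleftrightarrow>
     in_super_simple E i out a \<and> in_super_simple E i out b \<and> in_greater E i out a b \<and>
     \<not> (\<exists>c. in_super_simple E i out c \<and> in_greater E i out a c \<and> in_greater E i out c b)"

definition abs_super_simple :: "('a \<times> 'a) set \<Rightarrow> (nat \<Rightarrow> 'a) \<Rightarrow> nat \<Rightarrow> 'a \<Rightarrow> 'a \<Rightarrow> bool" where
  "abs_super_simple E inp n out v \<longleftrightarrow>
     (\<forall>m\<in>{1..n}. \<forall>p. simple_path E (inp m) out p \<longrightarrow> v \<in> set p)"

definition abs_greater :: "('a \<times> 'a) set \<Rightarrow> (nat \<Rightarrow> 'a) \<Rightarrow> nat \<Rightarrow> 'a \<Rightarrow> 'a \<Rightarrow> 'a \<Rightarrow> bool" where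
  "abs_greater E inp n out a b \<longleftrightarrow> (\<forall>m\<in>{1..n}. in_greater E (inp m) out a b)"

definition adjacent_abs_super_simple ::
  "('a \<times> 'a) set \<Rightarrow> (nat \<Rightarrow> 'a) \<Rightarrow> nat \<Rightarrow> 'a \<Rightarrow> 'a \<Rightarrow> 'a \<Rightarrow> bool" where
  "adjacent_abs_super_simple E inp n out a b \<longleftrightarrow>
     abs_super_simple E inp n out a \<and> abs_super_simple E inp n out b \<and>
     abs_greater E inp n out a b \<and>
     \<not> (\<exists>c. abs_super_simple E inp n out c \<and> abs_greater E inp n out a c \<and>
            abs_greater E inp n out c b)"

definition visits_in_order :: "'a list \<Rightarrow> 'a \<Rightarrow> 'a \<Rightarrow> 'a \<Rightarrow> bool" where
  "visits_in_order p a v c \<longleftrightarrow>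
     (\<exists>i j k. i \<le> j \<and> j \<le> k \<and> k < length p \<and> p ! i = a \<and> p ! j = v \<and> p ! k = c)"

definition G_in :: "'a set \<Rightarrow> ('a \<times> 'a) set \<Rightarrow> 'a \<Rightarrow> 'a \<Rightarrow> 'a set \<times> ('a \<times> 'a) set" where
  "G_in V E i out =
     (let N = {v\<in>V. downstream E i v \<and> downstream E v out} in (N, E \<inter> (N \<times> N)))"

definition L_in :: "'a set \<Rightarrow> ('a \<times> 'a) set \<Rightarrow> 'a \<Rightarrow> 'a \<Rightarrow> 'a \<Rightarrow> 'a \<Rightarrow> 'a set \<times> ('a \<times> 'a) set" where
  "L_in V E i out a b =
     (let N = {v. in_simple E i out v \<and>
                  (\<exists>p. simple_path E i out p \<and> visits_in_order p a v b)}
      in (N, snd (G_in V E i out) \<inter> (N \<times> N)))"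

definition L_abs :: "'a set \<Rightarrow> ('a \<times> 'a) set \<Rightarrow> (nat \<Rightarrow> 'a) \<Rightarrow> nat \<Rightarrow> 'a \<Rightarrow> 'a \<Rightarrow> 'a \<Rightarrow>
    'a set \<times> ('a \<times> 'a) set" where
  "L_abs V E inp n out a b =
     (let N = {v. abs_simple E inp n out v \<and>
                  (\<exists>m\<in>{1..n}. \<exists>p. simple_path E (inp m) out p \<and> visits_in_order p a v b)}
      in (N, E \<inter> (N \<times> N)))"

end

theory Submission
  imports Defs "HOL-Library.Transitive_Closure_Table"
begin

text \<open>If a node a lies on every \<iota>-o simple path, then the part after a of any simple
  path to o, from whichever input, can be grafted onto the part before a of an \<iota>-o simple
  path: the two pieces are disjoint, since otherwise a shortcut would give an \<iota>-o simple
  path avoiding a. So behind an absolutely super-simple node the simple paths to o do not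
  depend on the input, and the order relations and the nodes between two such nodes are
  the same for every input.\<close>

lemma is_path_iff_successively:
  "is_path E p \<longleftrightarrow> p \<noteq> [] \<and> successively (\<lambda>x y. (x, y) \<in> E) p"
  by (simp add: is_path_def successively_conv_nth)

lemma is_path_append_iff:
  "is_path E (xs @ b # ys) \<longleftrightarrow> is_path E (xs @ [b]) \<and> is_path E (b # ys)"
  by (auto simp: is_path_iff_successively successively_append_iff)

lemma simple_path_prefix:
  assumes "simple_path E a c (xs @ b # ys)"
  shows "simple_path E a b (xs @ [b])"
  using assms is_path_append_iff[of E xs b ys]
  by (cases xs) (auto simp: simple_path_def)

lemma simple_path_suffix:
  assumes "simple_path E a c (xs @ b # ys)"
  shows "simple_path E b c (b # ys)"
  using assms is_path_append_iff[of E xs b ys] by (auto simp: simple_path_def)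

lemma simple_path_append:
  assumes "simple_path E a b (xs @ [b])" and "simple_path E b c (b # ys)"
    and "set xs \<inter> set ys = {}"
  shows "simple_path E a c (xs @ b # ys)"
  using assms is_path_append_iff[of E xs b ys]
  by (cases xs) (auto simp: simple_path_def)

lemma is_path_rtrancl: "is_path E p \<Longrightarrow> (hd p, last p) \<in> E\<^sup>*"
  by (induction p rule: induct_list012) (auto simp: is_path_iff_successively)

lemma simple_path_node_downstream:
  assumes "simple_path E a b p" and "v \<in> set p"
  shows "downstream E a v \<and> downstream E v b"
proof -
  obtain xs ys where "p = xs @ v # ys" using \<open>v \<in> set p\<close> by (meson split_list)
  then have "simple_path E a b (xs @ v # ys)" using assms(1) by simp
  then have "simple_path E a v (xs @ [v])" and "simple_path E v b (v # ys)"
    by (rule simple_path_prefix, rule simple_path_suffix)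
  then show ?thesis
    unfolding downstream_def simple_path_def by (metis is_path_rtrancl)
qed

lemma rtrancl_path_is_path:
  "rtrancl_path (\<lambda>x y. (x, y) \<in> E) a xs b \<Longrightarrow> is_path E (a # xs) \<and> last (a # xs) = b"
  by (induction rule: rtrancl_path.induct) (auto simp: is_path_iff_successively)

lemma downstream_simple_pathE:
  assumes "downstream E a b"
  obtains p where "simple_path E a b p"
proof -
  have "(\<lambda>x y. (x, y) \<in> E)\<^sup>*\<^sup>* a b"
    using assms unfolding downstream_def rtranclp_rtrancl_eq by simp
  then obtain xs where "rtrancl_path (\<lambda>x y. (x, y) \<in> E) a xs b"
    unfolding rtranclp_eq_rtrancl_path by blast
  then obtain xs' where "rtrancl_path (\<lambda>x y. (x, y) \<in> E) a xs' b" and "distinct (a # xs')"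
    by (rule rtrancl_path_distinct)
  then have "simple_path E a b (a # xs')"
    unfolding simple_path_def using rtrancl_path_is_path[of E a xs' b] by simp
  then show thesis by (rule that)
qed

lemma before_on_in_set: "before_on p x y \<Longrightarrow> x \<in> set p \<and> y \<in> set p"
  unfolding before_on_def by auto

lemma visits_in_order_in_set:
  "visits_in_order p x v y \<Longrightarrow> x \<in> set p \<and> v \<in> set p \<and> y \<in> set p"
  unfolding visits_in_order_def by auto

lemma before_on_append_iff:
  assumes "distinct (xs @ ys)" and "x \<in> set ys"
  shows "before_on (xs @ ys) x y \<longleftrightarrow> before_on ys x y"
proof
  assume "before_on (xs @ ys) x y"
  then obtain i j where ij: "i < j" "j < length (xs @ ys)" "(xs @ ys) ! i = x" "(xs @ ys) ! j = y"
    unfolding before_on_def by blast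
  have "length xs \<le> i"
    using ij assms by (metis disjoint_iff distinct_append not_le nth_append nth_mem)
  then show "before_on ys x y" unfolding before_on_def
    using ij by (intro exI[of _ "i - length xs"] exI[of _ "j - length xs"]) (auto simp: nth_append)
next
  assume "before_on ys x y"
  then show "before_on (xs @ ys) x y" unfolding before_on_def
    by (metis add_less_cancel_left length_append nth_append_length_plus)
qed

lemma visits_in_order_append_iff:
  assumes "distinct (xs @ ys)" and "x \<in> set ys"
  shows "visits_in_order (xs @ ys) x v y \<longleftrightarrow> visits_in_order ys x v y"
proof
  assume "visits_in_order (xs @ ys) x v y"
  then obtain i j k where ijk: "i \<le> j" "j \<le> k" "k < length (xs @ ys)"
      "(xs @ ys) ! i = x" "(xs @ ys) ! j = v" "(xs @ ys) ! k = y"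
    unfolding visits_in_order_def by blast
  have "length xs \<le> i"
    using ijk assms by (metis disjoint_iff distinct_append not_le nth_append nth_mem)
  then show "visits_in_order ys x v y" unfolding visits_in_order_def
    using ijk by (intro exI[of _ "i - length xs"] exI[of _ "j - length xs"] exI[of _ "k - length xs"])
      (auto simp: nth_append)
next
  assume "visits_in_order ys x v y"
  then obtain i j k where ijk: "i \<le> j" "j \<le> k" "k < length ys" "ys ! i = x" "ys ! j = v" "ys ! k = y"
    unfolding visits_in_order_def by blast
  then show "visits_in_order (xs @ ys) x v y" unfolding visits_in_order_def
    by (intro exI[of _ "length xs + i"] exI[of _ "length xs + j"] exI[of _ "length xs + k"])
      (auto simp: nth_append)
qed

lemma simple_path_reroute:
  assumes a: "in_super_simple E i out a" and p: "simple_path E j out (p1 @ a # p2)"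
  obtains q1 where "simple_path E i out (q1 @ a # p2)"
proof -
  obtain q where q: "simple_path E i out q"
    and on_all: "\<And>r. simple_path E i out r \<Longrightarrow> a \<in> set r"
    using a unfolding in_super_simple_def in_simple_def by blast
  obtain q1 q2 where q_split: "q = q1 @ a # q2" using on_all[OF q] by (meson split_list)
  have head: "simple_path E i a (q1 @ [a])" using q q_split simple_path_prefix by metis
  have tail: "simple_path E a out (a # p2)" using p simple_path_suffix by metis
  have "set q1 \<inter> set p2 = {}"
  proof (rule ccontr)
    assume "set q1 \<inter> set p2 \<noteq> {}"
    then obtain u x w where q1_split: "q1 = u @ x # w" and "x \<in> set p2"
      and u_avoids: "\<forall>y\<in>set u. y \<notin> set p2"
      using split_list_first_prop[of q1 "\<lambda>x. x \<in> set p2"] by blast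
    then obtain s t where p2_split: "p2 = s @ x # t" by (meson split_list)
    have "simple_path E i x (u @ [x])"
      using head q1_split simple_path_prefix[of E i a u x "w @ [a]"] by simp
    moreover have "simple_path E x out (x # t)"
      using p p2_split simple_path_suffix[of E j out "p1 @ a # s" x t] by simp
    moreover have "set u \<inter> set t = {}" using u_avoids p2_split by auto
    ultimately have "simple_path E i out (u @ x # t)" by (rule simple_path_append)
    then have "a \<in> set (u @ x # t)" by (rule on_all)
    moreover have "distinct q" and "distinct (p1 @ a # p2)"
      using q p unfolding simple_path_def by simp_all
    ultimately show False using q_split q1_split p2_split by auto
  qed
  then show thesis using simple_path_append[OF head tail] that by blast
qed

lemma visits_in_order_reroute:
  assumes a: "in_super_simple E i out a" and p: "simple_path E j out p"
    and between: "visits_in_order p a v b"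
  obtains r where "simple_path E i out r" and "visits_in_order r a v b"
proof -
  obtain p1 p2 where p_split: "p = p1 @ a # p2"
    using visits_in_order_in_set[OF between] by (meson split_list)
  obtain q1 where r: "simple_path E i out (q1 @ a # p2)"
    using simple_path_reroute[OF a] p p_split by metis
  have "visits_in_order (a # p2) a v b"
    using between p p_split visits_in_order_append_iff[of p1 "a # p2"]
    unfolding simple_path_def by simp
  then have "visits_in_order (q1 @ a # p2) a v b"
    using r visits_in_order_append_iff[of q1 "a # p2"] unfolding simple_path_def by simp
  then show thesis using r that by blast
qed

lemma before_on_reroute:
  assumes a: "in_super_simple E i out a"
    and ac: "in_greater E i out a c" and cd: "in_greater E i out c d"
    and p: "simple_path E j out p" and "a \<in> set p"
  shows "before_on p a c \<and> before_on p c d"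
proof -
  obtain p1 p2 where p_split: "p = p1 @ a # p2" using \<open>a \<in> set p\<close> by (meson split_list)
  obtain q1 where r: "simple_path E i out (q1 @ a # p2)"
    using simple_path_reroute[OF a] p p_split by metis
  have dist_r: "distinct (q1 @ a # p2)" and dist_p: "distinct (p1 @ a # p2)"
    using r p p_split unfolding simple_path_def by simp_all
  have on_r: "before_on (q1 @ a # p2) a c" "before_on (q1 @ a # p2) c d"
    using ac cd r unfolding in_greater_def by blast+
  have ac': "before_on (a # p2) a c"
    using on_r(1) dist_r before_on_append_iff[of q1 "a # p2"] by simp
  then have c_in: "c \<in> set (a # p2)" using before_on_in_set by metis
  have cd': "before_on (a # p2) c d"
    using on_r(2) c_in dist_r before_on_append_iff[of q1 "a # p2"] by simp
  show ?thesis
    using ac' cd' c_in dist_p p_split before_on_append_iff[of p1 "a # p2"] by simp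
qed

lemma core_network_ex_simple_path:
  assumes "core_network V E inp n out" and "m \<in> {1..n}"
  shows "\<exists>p. simple_path E (inp m) out p"
proof -
  have "downstream E (inp m) out" using assms unfolding core_network_def by blast
  then show ?thesis by (blast elim: downstream_simple_pathE)
qed

lemma in_super_simple_if_abs_super_simple:
  "abs_super_simple E inp n out v \<Longrightarrow> m \<in> {1..n} \<Longrightarrow> simple_path E (inp m) out p
    \<Longrightarrow> in_super_simple E (inp m) out v"
  unfolding abs_super_simple_def in_super_simple_def in_simple_def by blast

lemma abs_greater_if_in_greater:
  assumes a: "abs_super_simple E inp n out a" and m: "m \<in> {1..n}"
    and q: "simple_path E (inp m) out q"
    and ac: "in_greater E (inp m) out a c" and cd: "in_greater E (inp m) out c d"
  shows "abs_super_simple E inp n out c \<and> abs_greater E inp n out a c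
    \<and> abs_greater E inp n out c d"
proof -
  have c_between: "before_on p a c \<and> before_on p c d"
    if "m' \<in> {1..n}" and "simple_path E (inp m') out p" for m' p
  proof -
    have "a \<in> set p" using a that unfolding abs_super_simple_def by blast
    then show ?thesis
      using before_on_reroute[OF in_super_simple_if_abs_super_simple[OF a m q] ac cd that(2)]
      by blast
  qed
  have "abs_super_simple E inp n out c"
    unfolding abs_super_simple_def
  proof (intro ballI allI impI)
    fix m' p assume "m' \<in> {1..n}" and "simple_path E (inp m') out p"
    then have "before_on p a c" using c_between by blast
    then show "c \<in> set p" using before_on_in_set by metis
  qed
  moreover have "abs_greater E inp n out a c" and "abs_greater E inp n out c d"
    unfolding abs_greater_def in_greater_def using c_between by blast+
  ultimately show ?thesis by blast
qed

lemma adjacent_in_super_simple_if_adjacent_abs_super_simple: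
  assumes adj: "adjacent_abs_super_simple E inp n out a b" and m: "m \<in> {1..n}"
    and "\<exists>p. simple_path E (inp m) out p"
  shows "adjacent_in_super_simple E (inp m) out a b"
proof -
  obtain q where q: "simple_path E (inp m) out q" using assms(3) by blast
  have abs_a: "abs_super_simple E inp n out a" and "abs_super_simple E inp n out b"
    using adj unfolding adjacent_abs_super_simple_def by simp_all
  then have "in_super_simple E (inp m) out a" and "in_super_simple E (inp m) out b"
    using in_super_simple_if_abs_super_simple[of E inp n out _ m, OF _ m q] by simp_all
  moreover have "\<not> (\<exists>c. in_super_simple E (inp m) out c \<and> in_greater E (inp m) out a c
      \<and> in_greater E (inp m) out c b)"
    using abs_greater_if_in_greater[OF abs_a m q] adj
    unfolding adjacent_abs_super_simple_def by blast
  ultimately show ?thesis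
    using adj m
    unfolding adjacent_in_super_simple_def adjacent_abs_super_simple_def abs_greater_def by blast
qed

lemma simple_path_node_in_G_in:
  assumes "E \<subseteq> V \<times> V" and "a \<in> V" and "simple_path E a b p" and "v \<in> set p"
  shows "v \<in> fst (G_in V E a b)"
proof -
  have reach: "downstream E a v \<and> downstream E v b"
    using assms(3,4) by (rule simple_path_node_downstream)
  then have "(a, v) \<in> E\<^sup>*" unfolding downstream_def by simp
  then have "v \<in> V" using assms(1,2) by (induction rule: rtrancl_induct) auto
  then show ?thesis using reach unfolding G_in_def Let_def by simp
qed

lemma visits_in_order_reroute_input:
  assumes "core_network V E inp n out" and "abs_super_simple E inp n out a"
    and "m \<in> {1..n}" and "simple_path E j out p" and "visits_in_order p a v b"
  obtains r where "simple_path E (inp m) out r" and "visits_in_order r a v b"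
proof -
  obtain q where "simple_path E (inp m) out q"
    using core_network_ex_simple_path[OF assms(1,3)] by blast
  then have "in_super_simple E (inp m) out a"
    by (rule in_super_simple_if_abs_super_simple[OF assms(2,3)])
  then show thesis using visits_in_order_reroute assms(4,5) that by metis
qed

lemma fst_L_in_eq_fst_L_abs:
  assumes net: "core_network V E inp n out" and a: "abs_super_simple E inp n out a"
    and m: "m \<in> {1..n}"
  shows "fst (L_in V E (inp m) out a b) = fst (L_abs V E inp n out a b)"
proof (intro equalityI subsetI)
  fix v assume "v \<in> fst (L_in V E (inp m) out a b)"
  then obtain p where p: "simple_path E (inp m) out p" and between: "visits_in_order p a v b"
    unfolding L_in_def Let_def by auto
  have "abs_simple E inp n out v"
    unfolding abs_simple_def in_simple_def
  proof
    fix m' assume "m' \<in> {1..n}"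
    then obtain r where "simple_path E (inp m') out r" and "visits_in_order r a v b"
      using visits_in_order_reroute_input[OF net a _ p between] by blast
    moreover have "v \<in> set r" using visits_in_order_in_set[OF \<open>visits_in_order r a v b\<close>] by simp
    ultimately show "\<exists>p. simple_path E (inp m') out p \<and> v \<in> set p" by blast
  qed
  then show "v \<in> fst (L_abs V E inp n out a b)"
    unfolding L_abs_def Let_def using m p between by auto
next
  fix v assume "v \<in> fst (L_abs V E inp n out a b)"
  then obtain m' p where "simple_path E (inp m') out p" and "visits_in_order p a v b"
    and "abs_simple E inp n out v"
    unfolding L_abs_def Let_def by auto
  moreover obtain r where "simple_path E (inp m) out r" and "visits_in_order r a v b"
    using visits_in_order_reroute_input[OF net a m] calculation(1,2) by blast
  ultimately show "v \<in> fst (L_in V E (inp m) out a b)"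
    unfolding L_in_def Let_def abs_simple_def using m by auto
qed

lemma L_in_eq_L_abs:
  assumes net: "core_network V E inp n out" and a: "abs_super_simple E inp n out a"
    and m: "m \<in> {1..n}"
  shows "L_in V E (inp m) out a b = L_abs V E inp n out a b"
proof -
  define N where "N = fst (L_abs V E inp n out a b)"
  have N_in: "fst (L_in V E (inp m) out a b) = N"
    unfolding N_def by (rule fst_L_in_eq_fst_L_abs[OF assms])
  have EV: "E \<subseteq> V \<times> V" and inp_m: "inp m \<in> V"
    using net m unfolding core_network_def by auto
  have "fst (L_in V E (inp m) out a b) \<subseteq> fst (G_in V E (inp m) out)"
  proof
    fix v assume "v \<in> fst (L_in V E (inp m) out a b)"
    then obtain p where "simple_path E (inp m) out p" and "v \<in> set p"
      unfolding L_in_def Let_def in_simple_def by auto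
    then show "v \<in> fst (G_in V E (inp m) out)" by (rule simple_path_node_in_G_in[OF EV inp_m])
  qed
  then have "snd (G_in V E (inp m) out) \<inter> N \<times> N = E \<inter> N \<times> N"
    unfolding N_in G_in_def Let_def by auto
  moreover have "L_in V E (inp m) out a b = (N, snd (G_in V E (inp m) out) \<inter> N \<times> N)"
    unfolding N_in[symmetric] by (simp add: L_in_def Let_def)
  ultimately show ?thesis
    unfolding N_def L_abs_def Let_def by simp
qed

theorem lemma3p21:
  fixes V :: "'a set" and E :: "('a \<times> 'a) set" and inp :: "nat \<Rightarrow> 'a"
    and n :: nat and out :: 'a and a b :: 'a
  assumes "core_network V E inp n out"
    and "adjacent_abs_super_simple E inp n out a b"
  shows "(\<forall>m\<in>{1..n}. adjacent_in_super_simple E (inp m) out a b)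
    \<and> (\<forall>m\<in>{1..n}. \<forall>v\<in>fst (L_in V E (inp m) out a b).
          in_simple E (inp m) out v \<longrightarrow> abs_simple E inp n out v)
    \<and> (\<forall>m\<in>{1..n}. L_in V E (inp m) out a b = L_abs V E inp n out a b)"
proof -
  have adjacent: "adjacent_in_super_simple E (inp m) out a b" if "m \<in> {1..n}" for m
    by (rule adjacent_in_super_simple_if_adjacent_abs_super_simple[OF assms(2) that
          core_network_ex_simple_path[OF assms(1) that]])
  have L_eq: "L_in V E (inp m) out a b = L_abs V E inp n out a b" if "m \<in> {1..n}" for m
    using L_in_eq_L_abs[OF assms(1) _ that] assms(2)
    unfolding adjacent_abs_super_simple_def by blast
  have "abs_simple E inp n out v" if "v \<in> fst (L_abs V E inp n out a b)" for v
    using that unfolding L_abs_def Let_def by simp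
  with adjacent L_eq show ?thesis by simp
qed

end
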